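(* Let $\mathbb{P}$ be a class of closed formulas, and let $P$ be a proof in $\mathbf{FBI}^{\mathbb{P}}$ of a safety problem $\Pi$. Then $\operatorname{Inv}^\rightleftharpoons(P)$ is a safe inductive invariant of $\Pi$, and if $P$ contains $n\in\mathbb{N}$ instances of the rule (Ind), then $\operatorname{Inv}^\rightleftharpoons(P)$ is a Boolean combination of $n$ predicates from $\mathbb{P}$.
   Context: A first-order vocabulary $\Sigma$ consists of constant, function and relation symbols; $\Sigma'=\{a' : a\in\Sigma\}$ is a disjoint copy, and for a formula $\varphi$ over $\Sigma$, $\varphi'$ denotes $\varphi$ with every symbol replaced by its primed copy. A safety problem is a triple $(\iota,\tau,\beta)$, where $\iota,\beta$ are closed formulas over $\Sigma$ and $\tau$ is a closed formula over $\Sigma\uplus\Sigma'$. $A\Rightarrow B$ means the implication $A\to B$ is valid. $\tau^{-1}$ denotes $\tau$ with each symbol of $\Sigma$ and its primed counterpart swapped. A closed formula $\varphi$ over $\Sigma$ is a safe inductive invariant of $(\iota,\tau,\beta)$ if $\iota\Rightarrow\varphi$, $\varphi\wedge\tau\Rightarrow\varphi'$ and $\varphi\Rightarrow\neg\beta$. Proofs: a proof of $\Pi$ in a system is a finite tree whose nodes are safety problems, whose root is $\Pi$, and in which each node together with its children is an instance of one of the system's rules, with side conditions valid. $\mathbf{FBI}$ has the rules ($\varphi$ ranges over closed formulas over $\Sigma$): (Ind): no premises; conclusion $(\iota,\tau,\neg\varphi)$; side conditions $\iota\Rightarrow\varphi$ and $\varphi\wedge\tau\Rightarrow\varphi'$.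 (Cons): premise $(\iota,\tau,\neg\varphi)$; conclusion $(\iota,\tau,\beta)$; side condition $\varphi\Rightarrow\neg\beta$. (Inc): premises $(\iota,\tau,\neg\varphi)$ and $(\iota\wedge\varphi,\ \tau\wedge\varphi\wedge\varphi',\ \beta\wedge\varphi)$; conclusion $(\iota,\tau,\beta)$. (Rev): premise $(\beta,\tau^{-1},\iota)$; conclusion $(\iota,\tau,\beta)$. $\mathbf{FBI}^{\mathbb{P}}$ is $\mathbf{FBI}$ with applications of (Ind) restricted to $\varphi\in\mathbb{P}$. $\operatorname{Inv}^\rightleftharpoons(P)$ is defined by induction on $P$: if the root is the conclusion $(\iota,\tau,\neg\varphi)$ of (Ind), it is $\varphi$; if the root is the conclusion of (Cons) with premise proof $\tilde P$, it is $\operatorname{Inv}^\rightleftharpoons(\tilde P)$; if the root is the conclusion of (Inc) with premise proofs $P_1,P_2$, it is $\operatorname{Inv}^\rightleftharpoons(P_1)\wedge\operatorname{Inv}^\rightleftharpoons(P_2)$; if the root is the conclusion of (Rev) with premise proof $\tilde P$, it is $\neg\operatorname{Inv}^\rightleftharpoons(\tilde P)$. *)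

theory Defs
  imports Main
begin

datatype 'f tm = Var nat | App 'f "'f tm list"

datatype ('f, 'r) fm =
    FF | TT
  | Atom 'r "'f tm list"
  | Eq "'f tm" "'f tm"
  | Neg "('f, 'r) fm"
  | Conj "('f, 'r) fm" "('f, 'r) fm"
  | Disj "('f, 'r) fm" "('f, 'r) fm"
  | Imp "('f, 'r) fm" "('f, 'r) fm"
  | Ex nat "('f, 'r) fm"
  | All nat "('f, 'r) fm"

fun fv_tm :: "'f tm \<Rightarrow> nat set" where
  "fv_tm (Var n) = {n}"
| "fv_tm (App f ts) = (\<Union>t\<in>set ts. fv_tm t)"

fun fv :: "('f, 'r) fm \<Rightarrow> nat set" where
  "fv FF = {}"
| "fv TT = {}"
| "fv (Atom r ts) = (\<Union>t\<in>set ts. fv_tm t)"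
| "fv (Eq s t) = fv_tm s \<union> fv_tm t"
| "fv (Neg p) = fv p"
| "fv (Conj p q) = fv p \<union> fv q"
| "fv (Disj p q) = fv p \<union> fv q"
| "fv (Imp p q) = fv p \<union> fv q"
| "fv (Ex x p) = fv p - {x}"
| "fv (All x p) = fv p - {x}"

definition closed :: "('f, 'r) fm \<Rightarrow> bool" where
  "closed p \<longleftrightarrow> fv p = {}"

fun eval_tm :: "('f \<Rightarrow> 'u list \<Rightarrow> 'u) \<Rightarrow> (nat \<Rightarrow> 'u) \<Rightarrow> 'f tm \<Rightarrow> 'u" where
  "eval_tm F e (Var n) = e n"
| "eval_tm F e (App f ts) = F f (map (eval_tm F e) ts)"

fun sat :: "('f \<Rightarrow> 'u list \<Rightarrow> 'u) \<Rightarrow> ('r \<Rightarrow> 'u list \<Rightarrow> bool) \<Rightarrow> (nat \<Rightarrow> 'u)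
             \<Rightarrow> ('f, 'r) fm \<Rightarrow> bool" where
  "sat F R e FF = False"
| "sat F R e TT = True"
| "sat F R e (Atom r ts) = R r (map (eval_tm F e) ts)"
| "sat F R e (Eq s t) = (eval_tm F e s = eval_tm F e t)"
| "sat F R e (Neg p) = (\<not> sat F R e p)"
| "sat F R e (Conj p q) = (sat F R e p \<and> sat F R e q)"
| "sat F R e (Disj p q) = (sat F R e p \<or> sat F R e q)"
| "sat F R e (Imp p q) = (sat F R e p \<longrightarrow> sat F R e q)"
| "sat F R e (Ex x p) = (\<exists>a. sat F R (e(x := a)) p)"
| "sat F R e (All x p) = (\<forall>a. sat F R (e(x := a)) p)"

definition valid :: "'u itself \<Rightarrow> ('f, 'r) fm \<Rightarrow> bool" where
  "valid U p \<longleftrightarrow> (\<forall>(F :: 'f \<Rightarrow> 'u list \<Rightarrow> 'u) R (e :: nat \<Rightarrow> 'u). sat F R e p)"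

definition entails :: "'u itself \<Rightarrow> ('f, 'r) fm \<Rightarrow> ('f, 'r) fm \<Rightarrow> bool" where
  "entails U A B \<longleftrightarrow> valid U (Imp A B)"

text \<open>\<Sigma> consists of all symbols of types 'f, 'r; \<Sigma> \<uplus> \<Sigma>' is represented by
  pairs (a, False) (= a) and (a, True) (= a').\<close>
type_synonym ('f, 'r) fm2 = "('f \<times> bool, 'r \<times> bool) fm"

definition unprimed :: "('f, 'r) fm \<Rightarrow> ('f, 'r) fm2" where
  "unprimed p = map_fm (\<lambda>f. (f, False)) (\<lambda>r. (r, False)) p"

definition primed :: "('f, 'r) fm \<Rightarrow> ('f, 'r) fm2" where
  "primed p = map_fm (\<lambda>f. (f, True)) (\<lambda>r. (r, True)) p"

text \<open>tau inverse: swap each symbol with its primed counterpart.\<close>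
definition swap :: "('f, 'r) fm2 \<Rightarrow> ('f, 'r) fm2" where
  "swap p = map_fm (\<lambda>(f, b). (f, \<not> b)) (\<lambda>(r, b). (r, \<not> b)) p"

type_synonym ('f, 'r) problem = "('f, 'r) fm \<times> ('f, 'r) fm2 \<times> ('f, 'r) fm"

definition safety_problem :: "('f, 'r) problem \<Rightarrow> bool" where
  "safety_problem \<Pi> = (case \<Pi> of (\<iota>, \<tau>, \<beta>) \<Rightarrow> closed \<iota> \<and> closed \<tau> \<and> closed \<beta>)"

definition safe_inductive_invariant :: "'u itself \<Rightarrow> ('f, 'r) fm \<Rightarrow> ('f, 'r) problem \<Rightarrow> bool" where
  "safe_inductive_invariant U \<phi> \<Pi> = (case \<Pi> of (\<iota>, \<tau>, \<beta>) \<Rightarrow>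
      closed \<phi> \<and> entails U \<iota> \<phi> \<and> entails U (Conj (unprimed \<phi>) \<tau>) (primed \<phi>)
      \<and> entails U \<phi> (Neg \<beta>))"

text \<open>A proof tree; each node records its conclusion, the rule applied and
  (for Ind, Cons, Inc) the formula \<phi> of that rule instance.\<close>
datatype ('f, 'r) fbi_proof =
    PInd "('f, 'r) problem" "('f, 'r) fm"
  | PCons "('f, 'r) problem" "('f, 'r) fm" "('f, 'r) fbi_proof"
  | PInc "('f, 'r) problem" "('f, 'r) fm" "('f, 'r) fbi_proof" "('f, 'r) fbi_proof"
  | PRev "('f, 'r) problem" "('f, 'r) fbi_proof"

fun root :: "('f, 'r) fbi_proof \<Rightarrow> ('f, 'r) problem" where
  "root (PInd \<Pi> _) = \<Pi>"
| "root (PCons \<Pi> _ _) = \<Pi>"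
| "root (PInc \<Pi> _ _ _) = \<Pi>"
| "root (PRev \<Pi> _) = \<Pi>"

fun is_proof :: "'u itself \<Rightarrow> ('f, 'r) fm set \<Rightarrow> ('f, 'r) fbi_proof \<Rightarrow> bool" where
  "is_proof U PP (PInd (\<iota>, \<tau>, \<beta>) \<phi>) \<longleftrightarrow>
     safety_problem (\<iota>, \<tau>, \<beta>) \<and> closed \<phi> \<and> \<phi> \<in> PP \<and> \<beta> = Neg \<phi> \<and>
     entails U \<iota> \<phi> \<and> entails U (Conj (unprimed \<phi>) \<tau>) (primed \<phi>)"
| "is_proof U PP (PCons (\<iota>, \<tau>, \<beta>) \<phi> P) \<longleftrightarrow>
     safety_problem (\<iota>, \<tau>, \<beta>) \<and> closed \<phi> \<and> root P = (\<iota>, \<tau>, Neg \<phi>) \<and>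
     entails U \<phi> (Neg \<beta>) \<and> is_proof U PP P"
| "is_proof U PP (PInc (\<iota>, \<tau>, \<beta>) \<phi> P1 P2) \<longleftrightarrow>
     safety_problem (\<iota>, \<tau>, \<beta>) \<and> closed \<phi> \<and> root P1 = (\<iota>, \<tau>, Neg \<phi>) \<and>
     root P2 = (Conj \<iota> \<phi>, Conj (Conj \<tau> (unprimed \<phi>)) (primed \<phi>), Conj \<beta> \<phi>) \<and>
     is_proof U PP P1 \<and> is_proof U PP P2"
| "is_proof U PP (PRev (\<iota>, \<tau>, \<beta>) P) \<longleftrightarrow>
     safety_problem (\<iota>, \<tau>, \<beta>) \<and> root P = (\<beta>, swap \<tau>, \<iota>) \<and> is_proof U PP P"

fun Inv :: "('f, 'r) fbi_proof \<Rightarrow> ('f, 'r) fm" where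
  "Inv (PInd _ \<phi>) = \<phi>"
| "Inv (PCons _ _ P) = Inv P"
| "Inv (PInc _ _ P1 P2) = Conj (Inv P1) (Inv P2)"
| "Inv (PRev _ P) = Neg (Inv P)"

fun num_ind :: "('f, 'r) fbi_proof \<Rightarrow> nat" where
  "num_ind (PInd _ _) = 1"
| "num_ind (PCons _ _ P) = num_ind P"
| "num_ind (PInc _ _ P1 P2) = num_ind P1 + num_ind P2"
| "num_ind (PRev _ P) = num_ind P"

inductive bool_comb :: "('f, 'r) fm set \<Rightarrow> ('f, 'r) fm \<Rightarrow> bool" for S where
  base: "\<phi> \<in> S \<Longrightarrow> bool_comb S \<phi>"
| neg: "bool_comb S \<phi> \<Longrightarrow> bool_comb S (Neg \<phi>)"
| conj: "bool_comb S \<phi> \<Longrightarrow> bool_comb S \<psi> \<Longrightarrow> bool_comb S (Conj \<phi> \<psi>)"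
| disj: "bool_comb S \<phi> \<Longrightarrow> bool_comb S \<psi> \<Longrightarrow> bool_comb S (Disj \<phi> \<psi>)"
| imp: "bool_comb S \<phi> \<Longrightarrow> bool_comb S \<psi> \<Longrightarrow> bool_comb S (Imp \<phi> \<psi>)"

end

theory Submission
  imports Defs
begin

text \<open>An (Ind) leaf is its own
  invariant and (Cons) only enlarges the safe region. For (Inc), the first invariant implies
  \<phi> in the current and in the next state, so inside it the restricted system of the second
  premise agrees with the original one and the conjunction is inductive. For (Rev), an
  invariant of the reversed system is closed under backward steps, so its complement is
  closed under forward steps; it contains the initial and excludes the bad states because
  the invariant itself contains the bad and excludes the initial ones.\<close>

lemma eval_tm_map_tm: "eval_tm F e (map_tm g t) = eval_tm (\<lambda>f. F (g f)) e t"
proof (induction t)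
  case (App f ts)
  have "map (eval_tm F e \<circ> map_tm g) ts = map (eval_tm (\<lambda>f. F (g f)) e) ts"
    using App by simp
  then show ?case by (simp only: tm.map eval_tm.simps map_map)
qed simp

lemma sat_map_fm: "sat F R e (map_fm g h p) = sat (\<lambda>f. F (g f)) (\<lambda>r. R (h r)) e p"
  by (induction p arbitrary: e) (auto simp: eval_tm_map_tm comp_def)

lemma sat_unprimed: "sat F R e (unprimed p) = sat (\<lambda>f. F (f, False)) (\<lambda>r. R (r, False)) e p"
  unfolding unprimed_def by (simp add: sat_map_fm)

lemma sat_primed: "sat F R e (primed p) = sat (\<lambda>f. F (f, True)) (\<lambda>r. R (r, True)) e p"
  unfolding primed_def by (simp add: sat_map_fm)

lemma sat_swap:
  "sat F R e (swap p) = sat (\<lambda>(f, b). F (f, \<not> b)) (\<lambda>(r, b). R (r, \<not> b)) e p"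
  unfolding swap_def by (simp only: sat_map_fm case_prod_unfold)

lemma swap_swap: "swap (swap p) = p"
  by (simp add: swap_def fm.map_comp comp_def case_prod_beta fm.map_ident)

lemma swap_unprimed: "swap (unprimed p) = primed p"
  by (simp add: swap_def unprimed_def primed_def fm.map_comp comp_def)

lemma swap_primed: "swap (primed p) = unprimed p"
  by (simp add: swap_def unprimed_def primed_def fm.map_comp comp_def)

lemma swap_Conj: "swap (Conj p q) = Conj (swap p) (swap q)"
  and swap_Imp: "swap (Imp p q) = Imp (swap p) (swap q)"
  by (simp_all add: swap_def)

lemma valid_swap: "valid U (swap p) \<longleftrightarrow> valid U p"
proof -
  have valid_swapI: "valid U (swap q)" if "valid U q" for q :: "('f, 'r) fm2"
    using that by (simp add: valid_def sat_swap)
  show ?thesis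
    using valid_swapI[of p] valid_swapI[of "swap p"] by (auto simp: swap_swap)
qed

lemma entails_swap: "entails U (swap A) (swap B) \<longleftrightarrow> entails U A B"
  by (simp add: entails_def valid_swap flip: swap_Imp)

lemma entails_iff:
  fixes U :: "'u itself"
  shows "entails U A B \<longleftrightarrow> (\<forall>(F :: 'f \<Rightarrow> 'u list \<Rightarrow> 'u) R e. sat F R e A \<longrightarrow> sat F R e B)"
  by (simp add: entails_def valid_def)

lemma safe_inductive_invariant_Ind:
  assumes "closed \<phi>" and "entails U \<iota> \<phi>" and "entails U (Conj (unprimed \<phi>) \<tau>) (primed \<phi>)"
  shows "safe_inductive_invariant U \<phi> (\<iota>, \<tau>, Neg \<phi>)"
  using assms by (simp add: safe_inductive_invariant_def entails_iff)

lemma safe_inductive_invariant_Cons: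
  assumes "safe_inductive_invariant U \<psi> (\<iota>, \<tau>, Neg \<phi>)" and "entails U \<phi> (Neg \<beta>)"
  shows "safe_inductive_invariant U \<psi> (\<iota>, \<tau>, \<beta>)"
  using assms by (auto simp: safe_inductive_invariant_def entails_iff)

lemma safe_inductive_invariant_Inc:
  fixes U :: "'u itself" and \<psi>\<^sub>1 :: "('f, 'r) fm"
  assumes inv\<^sub>1: "safe_inductive_invariant U \<psi>\<^sub>1 (\<iota>, \<tau>, Neg \<phi>)"
    and inv\<^sub>2: "safe_inductive_invariant U \<psi>\<^sub>2
           (Conj \<iota> \<phi>, Conj (Conj \<tau> (unprimed \<phi>)) (primed \<phi>), Conj \<beta> \<phi>)"
  shows "safe_inductive_invariant U (Conj \<psi>\<^sub>1 \<psi>\<^sub>2) (\<iota>, \<tau>, \<beta>)"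
proof -
  from inv\<^sub>1 have closed\<^sub>1: "closed \<psi>\<^sub>1"
    and init\<^sub>1: "entails U \<iota> \<psi>\<^sub>1"
    and step\<^sub>1: "entails U (Conj (unprimed \<psi>\<^sub>1) \<tau>) (primed \<psi>\<^sub>1)"
    and safe\<^sub>1: "entails U \<psi>\<^sub>1 (Neg (Neg \<phi>))"
    by (simp_all add: safe_inductive_invariant_def)
  from inv\<^sub>2 have closed\<^sub>2: "closed \<psi>\<^sub>2"
    and init\<^sub>2: "entails U (Conj \<iota> \<phi>) \<psi>\<^sub>2"
    and step\<^sub>2: "entails U (Conj (unprimed \<psi>\<^sub>2) (Conj (Conj \<tau> (unprimed \<phi>)) (primed \<phi>)))
                  (primed \<psi>\<^sub>2)"
    and safe\<^sub>2: "entails U \<psi>\<^sub>2 (Neg (Conj \<beta> \<phi>))"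
    by (simp_all add: safe_inductive_invariant_def)
  have "entails U \<iota> (Conj \<psi>\<^sub>1 \<psi>\<^sub>2)"
    using init\<^sub>1 init\<^sub>2 safe\<^sub>1 by (simp add: entails_iff)
  moreover have "entails U (Conj (unprimed (Conj \<psi>\<^sub>1 \<psi>\<^sub>2)) \<tau>) (primed (Conj \<psi>\<^sub>1 \<psi>\<^sub>2))"
    unfolding entails_iff
  proof (intro allI impI)
    fix F :: "'f \<times> bool \<Rightarrow> 'u list \<Rightarrow> 'u" and R e
    assume "sat F R e (Conj (unprimed (Conj \<psi>\<^sub>1 \<psi>\<^sub>2)) \<tau>)"
    then have pre: "sat F R e (unprimed \<psi>\<^sub>1)" "sat F R e (unprimed \<psi>\<^sub>2)" "sat F R e \<tau>"
      by (simp_all add: unprimed_def)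
    then have post\<^sub>1: "sat F R e (primed \<psi>\<^sub>1)"
      using step\<^sub>1 by (simp add: entails_iff)
    have "sat F R e (unprimed \<phi>)" "sat F R e (primed \<phi>)"
      using pre(1) post\<^sub>1 safe\<^sub>1 by (simp_all add: entails_iff sat_unprimed sat_primed)
    then have "sat F R e (primed \<psi>\<^sub>2)"
      using pre step\<^sub>2 by (simp add: entails_iff)
    with post\<^sub>1 show "sat F R e (primed (Conj \<psi>\<^sub>1 \<psi>\<^sub>2))"
      by (simp add: sat_primed)
  qed
  moreover have "entails U (Conj \<psi>\<^sub>1 \<psi>\<^sub>2) (Neg \<beta>)"
    using safe\<^sub>1 safe\<^sub>2 by (simp add: entails_iff) blast
  ultimately show ?thesis
    using closed\<^sub>1 closed\<^sub>2 by (simp add: safe_inductive_invariant_def closed_def)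
qed

lemma safe_inductive_invariant_Rev:
  assumes "safe_inductive_invariant U \<psi> (\<beta>, swap \<tau>, \<iota>)"
  shows "safe_inductive_invariant U (Neg \<psi>) (\<iota>, \<tau>, \<beta>)"
proof -
  have "entails U (swap (Conj (primed \<psi>) \<tau>)) (swap (unprimed \<psi>))"
    using assms by (simp add: safe_inductive_invariant_def swap_Conj swap_primed swap_unprimed)
  then have backward: "entails U (Conj (primed \<psi>) \<tau>) (unprimed \<psi>)"
    by (simp only: entails_swap)
  have "entails U (Conj (unprimed (Neg \<psi>)) \<tau>) (primed (Neg \<psi>))"
    using backward by (simp add: entails_iff unprimed_def primed_def) blast
  with assms show ?thesis
    by (auto simp: safe_inductive_invariant_def entails_iff closed_def)
qed

lemma safe_inductive_invariant_Inv:
  "is_proof U PP P \<Longrightarrow> safe_inductive_invariant U (Inv P) (root P)"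
proof (induction P)
  case (PInd \<Pi> \<phi>)
  then show ?case
    by (cases \<Pi>) (auto intro: safe_inductive_invariant_Ind)
next
  case (PCons \<Pi> \<phi> P)
  then show ?case
    by (cases \<Pi>) (auto intro: safe_inductive_invariant_Cons)
next
  case (PInc \<Pi> \<phi> P1 P2)
  then show ?case
    by (cases \<Pi>) (auto intro: safe_inductive_invariant_Inc)
next
  case (PRev \<Pi> P)
  then show ?case
    by (cases \<Pi>) (auto intro: safe_inductive_invariant_Rev)
qed

lemma bool_comb_mono: "bool_comb S \<phi> \<Longrightarrow> S \<subseteq> T \<Longrightarrow> bool_comb T \<phi>"
  by (induction rule: bool_comb.induct) (auto intro: bool_comb.intros)

lemma bool_comb_Inv:
  "is_proof U PP P \<Longrightarrow>
     \<exists>ps. length ps = num_ind P \<and> set ps \<subseteq> PP \<and> bool_comb (set ps) (Inv P)"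
proof (induction P)
  case (PInd \<Pi> \<phi>)
  then show ?case
    by (cases \<Pi>) (auto intro!: exI[of _ "[\<phi>]"] bool_comb.base)
next
  case (PCons \<Pi> \<phi> P)
  then show ?case by (cases \<Pi>) auto
next
  case (PInc \<Pi> \<phi> P1 P2)
  then obtain ps1 ps2
    where "length ps1 = num_ind P1" "set ps1 \<subseteq> PP" "bool_comb (set ps1) (Inv P1)"
      and "length ps2 = num_ind P2" "set ps2 \<subseteq> PP" "bool_comb (set ps2) (Inv P2)"
    by (cases \<Pi>) auto
  then show ?case
    by (intro exI[of _ "ps1 @ ps2"]) (auto intro!: bool_comb.conj elim!: bool_comb_mono)
next
  case (PRev \<Pi> P)
  then show ?case by (cases \<Pi>) (auto intro: bool_comb.neg)
qed

theorem theorem4p13: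
  fixes U :: "'u itself" and PP :: "('f, 'r) fm set" and P :: "('f, 'r) fbi_proof"
    and \<Pi> :: "('f, 'r) problem" and n :: nat
  assumes "\<forall>\<phi>\<in>PP. closed \<phi>"
    and "safety_problem \<Pi>"
    and "is_proof U PP P"
    and "root P = \<Pi>"
    and "num_ind P = n"
  shows "safe_inductive_invariant U (Inv P) \<Pi> \<and>
         (\<exists>ps. length ps = n \<and> set ps \<subseteq> PP \<and> bool_comb (set ps) (Inv P))"
  using safe_inductive_invariant_Inv[OF assms(3)] bool_comb_Inv[OF assms(3)] assms(4,5)
  by simp

end
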